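(* Let $G\cong\mathbb{R}^{d_1}\times\mathbb{R}^{d_2}$ be a 2-step stratified group with sub-Laplacian $\mathcal{L}$, with $\Omega$, $\phi$, $\phi_*$, $\mathfrak{l}_{\mathbf{y}}$, $\bar{\mathfrak{l}}_{\mathbf{y}}$ and $\Xi$ as defined below. For all $t\in\mathbb{R}$ and $(\mathbf{x},\mathbf{y},\boldsymbol{\xi})$ with $\mathbf{x}\in G$ and $(\mathbf{y},\boldsymbol{\xi})\in\Xi$, \[ \phi_*(t,\mathbf{x},\mathbf{y},\boldsymbol{\xi})=\phi(t,\mathfrak{l}_{\mathbf{y}}^{-1}\mathbf{x},\bar{\mathfrak{l}}_{\mathbf{y}}^{-1}\boldsymbol{\xi}). \]
   Context: $G$ is a 2-step stratified Lie group identified via exponential coordinates with $\mathbb{R}^{d_1}_x\times\mathbb{R}^{d_2}_u$, group law $(y,v)\cdot(x,u)=(y+x,v+u+[y,x]/2)$, coordinates on $\mathfrak{g}_1$ orthonormal for the inner product $\langle\cdot,\cdot\rangle$ making the vector fields $X_j$ of $\mathcal{L}=-\sum X_j^2$ orthonormal; $\mathbf{x}=(x,u)$, $\boldsymbol{\xi}=(\xi,\mu)$. $J_\mu$ is the skew-symmetric matrix with $\langle J_\mu x,x'\rangle=\mu\cdot[x,x']$, $|J_\mu|=(-J_\mu^2)^{1/2}$, and $\Omega$ is the set of $\mu$ where $\operatorname{rk}J_\mu$ is maximal. $\mathcal{H}(\mathbf{x},\boldsymbol{\xi})=|\xi+J_\mu x/2|$; for $(\mathbf{y},\boldsymbol{\xi})$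 with $\xi+J_\mu y/2\neq0$, $t\mapsto(\mathbf{x}_*^t(\mathbf{y},\boldsymbol{\xi}),\boldsymbol{\xi}_*^t(\mathbf{y},\boldsymbol{\xi}))$ is the solution of $\dot{\mathbf{x}}=\nabla_{\boldsymbol{\xi}}\mathcal{H}$, $\dot{\boldsymbol{\xi}}=-\nabla_{\mathbf{x}}\mathcal{H}$ with initial datum $(\mathbf{y},\boldsymbol{\xi})$, and $\mathbf{x}^t(\boldsymbol{\xi})=\mathbf{x}_*^t(0,\boldsymbol{\xi})$, $\boldsymbol{\xi}^t(\boldsymbol{\xi})=\boldsymbol{\xi}_*^t(0,\boldsymbol{\xi})$. Define $\phi(t,\mathbf{x},\boldsymbol{\xi})=(\mathbf{x}-\mathbf{x}^t(\boldsymbol{\xi}))\cdot\boldsymbol{\xi}^t(\boldsymbol{\xi})+\frac{i}{4}\langle|J_\mu|(x-x^t(\boldsymbol{\xi})),x-x^t(\boldsymbol{\xi})\rangle$ and $\phi_*(t,\mathbf{x},\mathbf{y},\boldsymbol{\xi})=(\mathbf{x}-\mathbf{x}_*^t(\mathbf{y},\boldsymbol{\xi}))\cdot\boldsymbol{\xi}_*^t(\mathbf{y},\boldsymbol{\xi})+\frac{i}{4}\langle|J_\mu|(x-x_*^t(\mathbf{y},\boldsymbol{\xi})),x-x_*^t(\mathbf{y},\boldsymbol{\xi})\rangle$ (where $x^t$, $x_*^t$ are first-layer components). $\mathfrak{l}_{\mathbf{y}}(\mathbf{x})=\mathbf{y}\cdot\mathbf{x}$ is left translation, and $\bar{\mathfrak{l}}_{\mathbf{y}}(\xi,\mu)=(\xi-J_\mu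 y/2,\mu)$ for $\mathbf{y}=(y,v)$. $\Xi_{\mathbf{y}}=\bar{\mathfrak{l}}_{\mathbf{y}}((\mathbb{R}^{d_1}\setminus\{0\})\times\Omega)$ and $\Xi=\bigcup_{\mathbf{y}\in G}\{\mathbf{y}\}\times\Xi_{\mathbf{y}}$. *)

theory Defs
  imports "HOL-Analysis.Analysis"
begin

text \<open>2-step stratified group on R^d1 x R^d2 (types real^'n, real^'m) with skew bilinear
  bracket B (the Lie bracket restricted to the first layer).\<close>

definition gmult :: "(real^'n \<Rightarrow> real^'n \<Rightarrow> real^'m) \<Rightarrow>
    ((real^'n) \<times> (real^'m)) \<Rightarrow> ((real^'n) \<times> (real^'m)) \<Rightarrow> ((real^'n) \<times> (real^'m))" where
  "gmult B p q = (fst p + fst q, snd p + snd q + (1/2) *\<^sub>R B (fst p) (fst q))"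

definition lmap :: "(real^'n \<Rightarrow> real^'n \<Rightarrow> real^'m) \<Rightarrow>
    ((real^'n) \<times> (real^'m)) \<Rightarrow> ((real^'n) \<times> (real^'m)) \<Rightarrow> ((real^'n) \<times> (real^'m))" where
  "lmap B y = gmult B y"

text \<open>J_mu, characterised by <J_mu x, x'> = mu . [x, x']\<close>
definition Jmap :: "(real^'n \<Rightarrow> real^'n \<Rightarrow> real^'m) \<Rightarrow> real^'m \<Rightarrow> real^'n \<Rightarrow> real^'n" where
  "Jmap B \<mu> x = (\<chi> i. \<mu> \<bullet> B x (axis i 1))"

definition absJ :: "(real^'n \<Rightarrow> real^'n \<Rightarrow> real^'m) \<Rightarrow> real^'m \<Rightarrow> real^'n \<Rightarrow> real^'n" where
  "absJ B \<mu> = (THE S. linear S \<and> (\<forall>x y. S x \<bullet> y = x \<bullet> S y) \<and> (\<forall>x. 0 \<le> S x \<bullet> x)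
       \<and> (\<forall>x. S (S x) = - Jmap B \<mu> (Jmap B \<mu> x)))"

definition Omega :: "(real^'n \<Rightarrow> real^'n \<Rightarrow> real^'m) \<Rightarrow> (real^'m) set" where
  "Omega B = {\<mu>. \<forall>\<nu>. dim (range (Jmap B \<nu>)) \<le> dim (range (Jmap B \<mu>))}"

definition barl :: "(real^'n \<Rightarrow> real^'n \<Rightarrow> real^'m) \<Rightarrow>
    ((real^'n) \<times> (real^'m)) \<Rightarrow> ((real^'n) \<times> (real^'m)) \<Rightarrow> ((real^'n) \<times> (real^'m))" where
  "barl B y \<xi> = (fst \<xi> - (1/2) *\<^sub>R Jmap B (snd \<xi>) (fst y), snd \<xi>)"

definition Xi :: "(real^'n \<Rightarrow> real^'n \<Rightarrow> real^'m) \<Rightarrow>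
    (((real^'n) \<times> (real^'m)) \<times> ((real^'n) \<times> (real^'m))) set" where
  "Xi B = {(y, \<xi>). \<xi> \<in> barl B y ` ((UNIV - {0}) \<times> Omega B)}"

definition grad :: "('a::real_inner \<Rightarrow> real) \<Rightarrow> 'a \<Rightarrow> 'a" where
  "grad f p = (THE g. (f has_derivative (\<lambda>h. g \<bullet> h)) (at p))"

definition ham_flow :: "('a::real_inner \<times> 'a \<Rightarrow> real) \<Rightarrow> 'a \<Rightarrow> 'a \<Rightarrow> real \<Rightarrow> 'a \<times> 'a" where
  "ham_flow H y \<xi> = (THE \<gamma>. \<gamma> 0 = (y, \<xi>) \<and>
     (\<forall>t. (\<gamma> has_vector_derivative
        (grad (\<lambda>\<eta>. H (fst (\<gamma> t), \<eta>)) (snd (\<gamma> t)),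
         - grad (\<lambda>z. H (z, snd (\<gamma> t))) (fst (\<gamma> t)))) (at t)))"

definition HamG :: "(real^'n \<Rightarrow> real^'n \<Rightarrow> real^'m) \<Rightarrow>
    ((real^'n) \<times> (real^'m)) \<times> ((real^'n) \<times> (real^'m)) \<Rightarrow> real" where
  "HamG B z = norm (fst (snd z) + (1/2) *\<^sub>R Jmap B (snd (snd z)) (fst (fst z)))"

definition xstar where "xstar B t y \<xi> = fst (ham_flow (HamG B) y \<xi> t)"
definition xistar where "xistar B t y \<xi> = snd (ham_flow (HamG B) y \<xi> t)"

definition phistar :: "(real^'n \<Rightarrow> real^'n \<Rightarrow> real^'m) \<Rightarrow> real \<Rightarrow>
    ((real^'n) \<times> (real^'m)) \<Rightarrow> ((real^'n) \<times> (real^'m)) \<Rightarrow> ((real^'n) \<times> (real^'m)) \<Rightarrow> complex" where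
  "phistar B t x y \<xi> =
     complex_of_real ((x - xstar B t y \<xi>) \<bullet> xistar B t y \<xi>)
     + (\<i> / 4) * complex_of_real
         (absJ B (snd \<xi>) (fst x - fst (xstar B t y \<xi>)) \<bullet> (fst x - fst (xstar B t y \<xi>)))"

text \<open>x^t(xi) = x_*^t(0, xi), xi^t(xi) = xi_*^t(0, xi)\<close>
definition phi :: "(real^'n \<Rightarrow> real^'n \<Rightarrow> real^'m) \<Rightarrow> real \<Rightarrow>
    ((real^'n) \<times> (real^'m)) \<Rightarrow> ((real^'n) \<times> (real^'m)) \<Rightarrow> complex" where
  "phi B t x \<xi> =
     complex_of_real ((x - xstar B t 0 \<xi>) \<bullet> xistar B t 0 \<xi>)
     + (\<i> / 4) * complex_of_real
         (absJ B (snd \<xi>) (fst x - fst (xstar B t 0 \<xi>)) \<bullet> (fst x - fst (xstar B t 0 \<xi>)))"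

end

theory Submission
  imports Defs
begin

text \<open>
  The Hamiltonian depends on a phase point only through its horizontal momentum
  \<open>w = \<xi> + J\<^sub>\<mu> x / 2\<close> (\<open>hmom\<close> below), and \<open>w\<close> is unchanged by the simultaneous
  translation \<open>(x, \<xi>) \<mapsto> (y \<cdot> x, barl B y \<xi>)\<close>. Along the Hamiltonian flow \<open>\<mu>\<close> is constant,
  \<open>|w|\<close> is conserved because \<open>J\<^sub>\<mu>\<close> is skew, and \<open>w\<close> solves the linear equation
  \<open>w' = J\<^sub>\<mu> w / |w|\<close>; the position is then recovered by integration. Hence for \<open>w \<noteq> 0\<close>
  the flow exists and is unique, and translating the flow from \<open>(0, \<xi>)\<close> gives the flow
  from \<open>(y, barl B y \<xi>)\<close>. The identity \<open>(x - y \<cdot> P) \<bullet> barl B y Q = (y\<inverse> \<cdot> x - P) \<bullet> Q\<close>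
  then matches the two phases.
\<close>

section \<open>Calculus preliminaries\<close>

text \<open>
  The library makes \<open>'a \<Rightarrow>\<^sub>L 'a\<close> a Banach space but not an algebra; as a Banach algebra
  it provides the exponential that solves linear ODEs.
\<close>

typedef (overloaded) 'a blinop = "UNIV :: ('a::real_normed_vector \<Rightarrow>\<^sub>L 'a) set"
  morphisms Rep_blinop Abs_blinop by auto

setup_lifting type_definition_blinop

instantiation blinop :: (real_normed_vector) real_normed_vector
begin
lift_definition norm_blinop :: "'a blinop \<Rightarrow> real" is norm .
lift_definition minus_blinop :: "'a blinop \<Rightarrow> 'a blinop \<Rightarrow> 'a blinop" is "(-)" .
lift_definition uminus_blinop :: "'a blinop \<Rightarrow> 'a blinop" is uminus .
lift_definition zero_blinop :: "'a blinop" is 0 .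
lift_definition plus_blinop :: "'a blinop \<Rightarrow> 'a blinop \<Rightarrow> 'a blinop" is "(+)" .
lift_definition scaleR_blinop :: "real \<Rightarrow> 'a blinop \<Rightarrow> 'a blinop" is scaleR .
definition dist_blinop :: "'a blinop \<Rightarrow> 'a blinop \<Rightarrow> real" where "dist_blinop a b = norm (a - b)"
definition uniformity_blinop :: "('a blinop \<times> 'a blinop) filter"
  where "uniformity_blinop = (INF e\<in>{0 <..}. principal {(x, y). dist x y < e})"
definition open_blinop :: "'a blinop set \<Rightarrow> bool"
  where "open_blinop S = (\<forall>x\<in>S. \<forall>\<^sub>F (x', y) in uniformity. x' = x \<longrightarrow> y \<in> S)"
definition sgn_blinop :: "'a blinop \<Rightarrow> 'a blinop" where "sgn_blinop x = scaleR (inverse (norm x)) x"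
instance
  by standard
    (unfold dist_blinop_def open_blinop_def sgn_blinop_def uniformity_blinop_def,
     (rule refl | (transfer, force simp: norm_triangle_ineq algebra_simps))+)
end

instantiation blinop :: (real_normed_vector) real_normed_algebra
begin
lift_definition times_blinop :: "'a blinop \<Rightarrow> 'a blinop \<Rightarrow> 'a blinop" is "(o\<^sub>L)" .
instance
  by standard
    ((transfer, rule blinfun_eqI, simp add: blinfun.bilinear_simps)+,
     transfer, rule norm_blinfun_compose)
end

instantiation blinop :: ("{real_normed_vector,perfect_space}") real_normed_algebra_1
begin
lift_definition one_blinop :: "'a blinop" is id_blinfun .
instance
proof
  show "1 * a = a" and "a * 1 = a" for a :: "'a blinop"
    by (transfer, rule blinfun_eqI, simp)+
  show "norm (1 :: 'a blinop) = 1"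
    by transfer (rule norm_blinfun_id)
  then show "(0 :: 'a blinop) \<noteq> 1"
    by (metis norm_zero zero_neq_one)
qed
end

instance blinop :: (banach) banach
proof
  fix X :: "nat \<Rightarrow> 'a blinop"
  assume "Cauchy X"
  then have "Cauchy (\<lambda>n. Rep_blinop (X n))"
    unfolding Cauchy_def dist_norm by (metis minus_blinop.rep_eq norm_blinop.rep_eq)
  then obtain L where "(\<lambda>n. Rep_blinop (X n)) \<longlonglongrightarrow> L"
    using Cauchy_convergent convergent_def by blast
  then have "X \<longlonglongrightarrow> Abs_blinop L"
    unfolding tendsto_iff dist_norm by (simp add: minus_blinop.rep_eq norm_blinop.rep_eq Abs_blinop_inverse)
  then show "convergent X" unfolding convergent_def by blast
qed

lemma linear_ode_solution_exists:
  fixes A :: "'a::{banach,perfect_space} \<Rightarrow> 'a"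
  assumes "bounded_linear A"
  obtains W where "W 0 = v" and "\<And>t. (W has_vector_derivative A (W t)) (at t)"
proof
  define E :: "'a blinop" where "E = Abs_blinop (Blinfun A)"
  define apply_v where "apply_v = (\<lambda>e::'a blinop. blinfun_apply (Rep_blinop e) v)"
  have apply_v: "bounded_linear apply_v"
  proof (rule bounded_linear_intro[where K="norm v"])
    show "apply_v (a + b) = apply_v a + apply_v b" for a b
      by (simp add: apply_v_def plus_blinop.rep_eq blinfun.add_left)
    show "apply_v (r *\<^sub>R a) = r *\<^sub>R apply_v a" for r a
      by (simp add: apply_v_def scaleR_blinop.rep_eq blinfun.scaleR_left)
    show "norm (apply_v a) \<le> norm a * norm v" for a
      using norm_blinfun[of "Rep_blinop a" v] by (simp add: apply_v_def norm_blinop.rep_eq)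
  qed
  show "((\<lambda>t. apply_v (exp (t *\<^sub>R E))) has_vector_derivative A (apply_v (exp (t *\<^sub>R E)))) (at t)" for t
    using bounded_linear.has_vector_derivative[OF apply_v exp_scaleR_has_vector_derivative_left[of E t]] assms
    by (simp add: apply_v_def E_def times_blinop.rep_eq Abs_blinop_inverse bounded_linear_Blinfun_apply)
  show "apply_v (exp (0 *\<^sub>R E)) = v"
    by (simp add: apply_v_def one_blinop.rep_eq)
qed

lemma primitive_exists:
  fixes f :: "real \<Rightarrow> 'a::euclidean_space"
  assumes "continuous_on UNIV f"
  obtains F where "F 0 = c" and "\<And>t. (F has_vector_derivative f t) (at t)"
proof -
  obtain G where "\<forall>t. -\<infinity> < ereal t \<longrightarrow> ereal t < \<infinity> \<longrightarrow> (G has_vector_derivative f t) (at t)"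
    using einterval_antiderivative[of "-\<infinity>" "\<infinity>" f] assms
    by (auto simp: continuous_on_eq_continuous_at)
  then show ?thesis
    by (intro that[of "\<lambda>t. G t - G 0 + c"]) (auto intro!: derivative_eq_intros)
qed

lemma constant_if_vector_derivative_zero:
  assumes "\<And>s. (g has_vector_derivative 0) (at s)"
  shows "g t = g 0"
  using has_vector_derivative_zero_constant[of UNIV g] assms by (metis UNIV_I convex_UNIV)

lemma eq_if_same_vector_derivative:
  assumes "\<And>s. (g has_vector_derivative D s) (at s)" and "\<And>s. (h has_vector_derivative D s) (at s)"
    and "g 0 = h 0"
  shows "g t = h t"
proof -
  have "g t - h t = g 0 - h 0"
    using has_vector_derivative_diff[OF assms(1,2)]
    by (intro constant_if_vector_derivative_zero[of "\<lambda>s. g s - h s"]) simp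
  with assms(3) show ?thesis by simp
qed

lemma norm_constant_if_derivative_orthogonal:
  fixes f :: "real \<Rightarrow> 'a::real_inner"
  assumes "\<And>s. (f has_vector_derivative f' s) (at s)" and "\<And>s. f' s \<bullet> f s = 0"
  shows "norm (f t) = norm (f 0)"
proof -
  have "f t \<bullet> f t = f 0 \<bullet> f 0"
    using bounded_bilinear.has_vector_derivative[OF bounded_bilinear_inner assms(1) assms(1)] assms(2)
    by (intro constant_if_vector_derivative_zero[of "\<lambda>s. f s \<bullet> f s"]) (simp add: inner_commute)
  then show ?thesis by (simp add: norm_eq_sqrt_inner)
qed

lemma has_vector_derivative_fst:
  "(\<gamma> has_vector_derivative D) F \<Longrightarrow> ((\<lambda>s. fst (\<gamma> s)) has_vector_derivative fst D) F"
  by (rule bounded_linear.has_vector_derivative[OF bounded_linear_fst])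

lemma has_vector_derivative_snd:
  "(\<gamma> has_vector_derivative D) F \<Longrightarrow> ((\<lambda>s. snd (\<gamma> s)) has_vector_derivative snd D) F"
  by (rule bounded_linear.has_vector_derivative[OF bounded_linear_snd])

lemma grad_eqI:
  assumes "(f has_derivative (\<lambda>h. g \<bullet> h)) (at p)"
  shows "grad f p = g"
  unfolding grad_def
proof (rule the_equality)
  fix g' assume "(f has_derivative (\<lambda>h. g' \<bullet> h)) (at p)"
  then have "(\<lambda>h. g' \<bullet> h) = (\<lambda>h. g \<bullet> h)"
    using assms has_derivative_unique by blast
  then have "(g' - g) \<bullet> (g' - g) = 0"
    by (metis inner_diff_left diff_self)
  then show "g' = g" by simp
qed (fact assms)

lemma grad_norm_affine:
  fixes L :: "'a::real_inner \<Rightarrow> 'b::real_inner"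
  assumes "bounded_linear L" and A: "\<And>q. A q = c + L q" and "A p = w" and "w \<noteq> 0"
    and adjoint: "\<And>h. L h \<bullet> w = g \<bullet> h"
  shows "grad (\<lambda>q. norm (A q)) p = (1 / norm w) *\<^sub>R g"
proof (rule grad_eqI)
  have "((\<lambda>q. c + L q) has_derivative L) (at p)"
    using bounded_linear_imp_has_derivative[OF \<open>bounded_linear L\<close>] by (auto intro!: derivative_eq_intros)
  from has_derivative_compose[OF this has_derivative_norm] \<open>A p = w\<close> \<open>w \<noteq> 0\<close>
  have "((\<lambda>q. norm (A q)) has_derivative (\<lambda>h. L h \<bullet> sgn w)) (at p)"
    unfolding A[abs_def] by simp
  moreover have "L h \<bullet> sgn w = ((1 / norm w) *\<^sub>R g) \<bullet> h" for h
    using adjoint[of h] by (simp add: sgn_div_norm divide_inverse_commute)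
  ultimately show "((\<lambda>q. norm (A q)) has_derivative (\<lambda>h. ((1 / norm w) *\<^sub>R g) \<bullet> h)) (at p)"
    by simp
qed

section \<open>The Hamiltonian flow\<close>

type_synonym ('n, 'm) point = "(real^'n) \<times> (real^'m)"
type_synonym ('n, 'm) phase = "('n, 'm) point \<times> ('n, 'm) point"

definition hmom :: "(real^'n \<Rightarrow> real^'n \<Rightarrow> real^'m) \<Rightarrow> ('n, 'm) phase \<Rightarrow> real^'n" where
  "hmom B p = fst (snd p) + (1/2) *\<^sub>R Jmap B (snd (snd p)) (fst (fst p))"

definition ham_field :: "(real^'n \<Rightarrow> real^'n \<Rightarrow> real^'m) \<Rightarrow> ('n, 'm) phase \<Rightarrow> ('n, 'm) phase" where
  "ham_field B p = (grad (\<lambda>\<eta>. HamG B (fst p, \<eta>)) (snd p), - grad (\<lambda>z. HamG B (z, snd p)) (fst p))"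

definition ham_solution :: "(real^'n \<Rightarrow> real^'n \<Rightarrow> real^'m) \<Rightarrow> ('n, 'm) point \<Rightarrow> ('n, 'm) point
    \<Rightarrow> (real \<Rightarrow> ('n, 'm) phase) \<Rightarrow> bool" where
  "ham_solution B y \<xi> \<gamma> \<longleftrightarrow> \<gamma> 0 = (y, \<xi>) \<and> (\<forall>t. (\<gamma> has_vector_derivative ham_field B (\<gamma> t)) (at t))"

lemma ham_flow_eq_The: "ham_flow (HamG B) y \<xi> = (THE \<gamma>. ham_solution B y \<xi> \<gamma>)"
  by (simp add: ham_flow_def ham_solution_def ham_field_def)

definition phase_curve :: "(real^'n \<Rightarrow> real^'n \<Rightarrow> real^'m) \<Rightarrow> real^'m \<Rightarrow> (real \<Rightarrow> real^'n)
    \<Rightarrow> (real \<Rightarrow> real^'m) \<Rightarrow> (real \<Rightarrow> real^'n) \<Rightarrow> real \<Rightarrow> ('n, 'm) phase" where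
  "phase_curve B \<mu> X U W t = ((X t, U t), (W t - (1/2) *\<^sub>R Jmap B \<mu> (X t), \<mu>))"

definition hmom_derivative :: "(real^'n \<Rightarrow> real^'n \<Rightarrow> real^'m) \<Rightarrow> ('n, 'm) phase \<Rightarrow> ('n, 'm) phase \<Rightarrow> real^'n" where
  "hmom_derivative B p D =
    fst (snd D) + (1/2) *\<^sub>R (Jmap B (snd (snd p)) (fst (fst D)) + Jmap B (snd (snd D)) (fst (fst p)))"

locale skew_bracket =
  fixes B :: "real^'n \<Rightarrow> real^'n \<Rightarrow> real^'m"
  assumes bilinear: "bilinear B" and skew: "B a b = - B b a"

sublocale skew_bracket \<subseteq> bracket: bounded_bilinear B
  using bilinear bilinear_conv_bounded_bilinear by blast

context skew_bracket
begin

lemma bracket_self [simp]: "B a a = 0"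
proof -
  have "2 *\<^sub>R B a a = 0"
    using skew[of a a] by (metis eq_neg_iff_add_eq_0 scaleR_2)
  then show ?thesis by simp
qed

lemma Jmap_inner: "Jmap B \<mu> x \<bullet> z = \<mu> \<bullet> B x z"
proof -
  have "B x z = B x (\<Sum>i\<in>UNIV. z $ i *\<^sub>R axis i 1)"
    using basis_expansion[of z] by (simp add: scalar_mult_eq_scaleR)
  also have "\<dots> = (\<Sum>i\<in>UNIV. z $ i *\<^sub>R B x (axis i 1))"
    by (simp add: bracket.sum_right bracket.scaleR_right)
  finally have "\<mu> \<bullet> B x z = (\<Sum>i\<in>UNIV. z $ i * (\<mu> \<bullet> B x (axis i 1)))"
    by (simp add: inner_sum_right)
  then show ?thesis
    by (simp add: Jmap_def inner_vec_def mult.commute)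
qed

lemma Jmap_bounded_bilinear: "bounded_bilinear (Jmap B)"
proof -
  have "linear (\<lambda>\<mu>. Jmap B \<mu> x)" for x
    by (rule linearI) (simp_all add: Jmap_def vec_eq_iff inner_add_left)
  moreover have "linear (Jmap B \<mu>)" for \<mu>
    by (rule linearI) (simp_all add: Jmap_def vec_eq_iff bracket.add_left bracket.scaleR_left inner_add_right)
  ultimately show ?thesis
    using bilinear_conv_bounded_bilinear bilinear_def by blast
qed

end

sublocale skew_bracket \<subseteq> J: bounded_bilinear "Jmap B"
  by (rule Jmap_bounded_bilinear)

context skew_bracket
begin

lemma Jmap_skew: "Jmap B \<mu> x \<bullet> z = - (Jmap B \<mu> z \<bullet> x)"
  using skew[of x z] by (simp add: Jmap_inner)

lemma Jmap_orthogonal [simp]: "Jmap B \<mu> x \<bullet> x = 0"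
  using Jmap_skew[of \<mu> x x] by simp

lemma ham_field_eq:
  assumes "hmom B p \<noteq> 0"
  shows "ham_field B p =
    (((1 / norm (hmom B p)) *\<^sub>R hmom B p, (1 / (2 * norm (hmom B p))) *\<^sub>R B (fst (fst p)) (hmom B p)),
     ((1 / (2 * norm (hmom B p))) *\<^sub>R Jmap B (snd (snd p)) (hmom B p), 0))"
proof -
  obtain x u \<xi> \<mu> where p: "p = ((x, u), (\<xi>, \<mu>))"
    by (metis prod.collapse)
  define w where "w = hmom B p"
  have w: "w = \<xi> + (1/2) *\<^sub>R Jmap B \<mu> x" and "w \<noteq> 0"
    using assms by (simp_all add: w_def hmom_def p)
  have "grad (\<lambda>\<eta>. HamG B ((x, u), \<eta>)) (\<xi>, \<mu>) = (1 / norm w) *\<^sub>R (w, (1/2) *\<^sub>R B x w)"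
    unfolding HamG_def fst_conv snd_conv
  proof (rule grad_norm_affine[where c = 0])
    show "bounded_linear (\<lambda>\<eta>. fst \<eta> + (1/2) *\<^sub>R Jmap B (snd \<eta>) x)"
      by (intro bounded_linear_add bounded_linear_fst bounded_linear_const_scaleR
          bounded_linear_compose[OF J.bounded_linear_left bounded_linear_snd])
    show "(fst h + (1/2) *\<^sub>R Jmap B (snd h) x) \<bullet> w = (w, (1/2) *\<^sub>R B x w) \<bullet> h" for h :: "('n, 'm) point"
      by (simp add: Jmap_inner inner_prod_def inner_add_left inner_commute[of w] inner_commute[of "B x w"])
  qed (use w \<open>w \<noteq> 0\<close> in simp_all)
  moreover have "grad (\<lambda>z. HamG B (z, (\<xi>, \<mu>))) (x, u) = (1 / norm w) *\<^sub>R (- (1/2) *\<^sub>R Jmap B \<mu> w, 0)"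
    unfolding HamG_def fst_conv snd_conv
  proof (rule grad_norm_affine[where c = \<xi>])
    show "bounded_linear (\<lambda>z. (1/2) *\<^sub>R Jmap B \<mu> (fst z))"
      by (intro bounded_linear_const_scaleR bounded_linear_compose[OF J.bounded_linear_right bounded_linear_fst])
    show "(1/2) *\<^sub>R Jmap B \<mu> (fst h) \<bullet> w = (- (1/2) *\<^sub>R Jmap B \<mu> w, 0::real^'m) \<bullet> h" for h :: "('n, 'm) point"
      using Jmap_skew[of \<mu> "fst h" w] by (simp add: inner_prod_def)
  qed (use w \<open>w \<noteq> 0\<close> in simp_all)
  moreover have "hmom B ((x, u), (\<xi>, \<mu>)) = w"
    by (simp add: w_def p)
  ultimately show ?thesis
    by (simp add: ham_field_def p scaleR_scaleR mult.commute)
qed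

lemma hmom_has_vector_derivative:
  assumes "(\<gamma> has_vector_derivative D) (at t)"
  shows "((\<lambda>s. hmom B (\<gamma> s)) has_vector_derivative hmom_derivative B (\<gamma> t) D) (at t)"
proof -
  note component = has_vector_derivative_fst[OF has_vector_derivative_fst[OF assms]]
    has_vector_derivative_fst[OF has_vector_derivative_snd[OF assms]]
    has_vector_derivative_snd[OF has_vector_derivative_snd[OF assms]]
  show ?thesis
    unfolding hmom_def hmom_derivative_def
    by (intro has_vector_derivative_add component
        bounded_linear.has_vector_derivative[OF bounded_linear_scaleR_right]
        J.has_vector_derivative)
qed

lemma hmom_derivative_ham_field:
  assumes "hmom B p \<noteq> 0"
  shows "hmom_derivative B p (ham_field B p) = (1 / norm (hmom B p)) *\<^sub>R Jmap B (snd (snd p)) (hmom B p)"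
  using assms
  by (simp add: hmom_derivative_def ham_field_eq J.scaleR_right J.zero_left scaleR_scaleR flip: scaleR_add_left)

text \<open>Where \<open>hmom B p = 0\<close> the gradients in \<open>ham_field\<close> are junk values of \<open>THE\<close>, but the
  inner product vanishes there anyway; so \<open>|hmom|\<close> is conserved along every solution.\<close>

lemma hmom_derivative_ham_field_orthogonal: "hmom_derivative B p (ham_field B p) \<bullet> hmom B p = 0"
  by (cases "hmom B p = 0") (simp_all add: hmom_derivative_ham_field)

lemma ham_solutionD:
  assumes sol: "ham_solution B y \<xi> \<gamma>" and "hmom B (y, \<xi>) \<noteq> 0"
  defines "h \<equiv> norm (hmom B (y, \<xi>))"
  shows "norm (hmom B (\<gamma> t)) = h"
    and "snd (snd (\<gamma> t)) = snd \<xi>"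
    and "((\<lambda>s. hmom B (\<gamma> s)) has_vector_derivative (1 / h) *\<^sub>R Jmap B (snd \<xi>) (hmom B (\<gamma> t))) (at t)"
    and "((\<lambda>s. fst (fst (\<gamma> s))) has_vector_derivative (1 / h) *\<^sub>R hmom B (\<gamma> t)) (at t)"
    and "((\<lambda>s. snd (fst (\<gamma> s))) has_vector_derivative
          (1 / (2 * h)) *\<^sub>R B (fst (fst (\<gamma> t))) (hmom B (\<gamma> t))) (at t)"
    and "fst (snd (\<gamma> t)) = hmom B (\<gamma> t) - (1/2) *\<^sub>R Jmap B (snd \<xi>) (fst (fst (\<gamma> t)))"
proof -
  have \<gamma>0: "\<gamma> 0 = (y, \<xi>)" and \<gamma>': "\<And>s. (\<gamma> has_vector_derivative ham_field B (\<gamma> s)) (at s)"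
    using sol by (auto simp: ham_solution_def)
  have norm_hmom: "norm (hmom B (\<gamma> s)) = h" for s
    using norm_constant_if_derivative_orthogonal[OF hmom_has_vector_derivative[OF \<gamma>']
        hmom_derivative_ham_field_orthogonal] \<gamma>0
    by (simp add: h_def)
  moreover have "h > 0"
    using assms(2) by (simp add: h_def)
  ultimately have hmom_nz: "hmom B (\<gamma> s) \<noteq> 0" for s
    by force
  have field: "ham_field B (\<gamma> s) =
      (((1 / h) *\<^sub>R hmom B (\<gamma> s), (1 / (2 * h)) *\<^sub>R B (fst (fst (\<gamma> s))) (hmom B (\<gamma> s))),
       ((1 / (2 * h)) *\<^sub>R Jmap B (snd (snd (\<gamma> s))) (hmom B (\<gamma> s)), 0))" for s
    using ham_field_eq[OF hmom_nz] norm_hmom by simp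
  have \<mu>: "snd (snd (\<gamma> s)) = snd \<xi>" for s
  proof -
    have "snd (snd (\<gamma> s)) = snd (snd (\<gamma> 0))"
      using has_vector_derivative_snd[OF has_vector_derivative_snd[OF \<gamma>']]
      by (intro constant_if_vector_derivative_zero) (simp add: field)
    with \<gamma>0 show ?thesis by simp
  qed
  show "norm (hmom B (\<gamma> t)) = h" and "snd (snd (\<gamma> t)) = snd \<xi>"
    by (fact norm_hmom \<mu>)+
  show "((\<lambda>s. hmom B (\<gamma> s)) has_vector_derivative (1 / h) *\<^sub>R Jmap B (snd \<xi>) (hmom B (\<gamma> t))) (at t)"
    using hmom_has_vector_derivative[OF \<gamma>'[of t]] hmom_derivative_ham_field[OF hmom_nz] norm_hmom \<mu>
    by simp
  show "((\<lambda>s. fst (fst (\<gamma> s))) has_vector_derivative (1 / h) *\<^sub>R hmom B (\<gamma> t)) (at t)"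
    using has_vector_derivative_fst[OF has_vector_derivative_fst[OF \<gamma>'[of t]]] by (simp add: field)
  show "((\<lambda>s. snd (fst (\<gamma> s))) has_vector_derivative
          (1 / (2 * h)) *\<^sub>R B (fst (fst (\<gamma> t))) (hmom B (\<gamma> t))) (at t)"
    using has_vector_derivative_snd[OF has_vector_derivative_fst[OF \<gamma>'[of t]]] by (simp add: field)
  show "fst (snd (\<gamma> t)) = hmom B (\<gamma> t) - (1/2) *\<^sub>R Jmap B (snd \<xi>) (fst (fst (\<gamma> t)))"
    by (simp add: hmom_def \<mu>)
qed

lemma phase_curve_ham_solution:
  assumes "h > 0"
    and W_norm: "\<And>t. norm (W t) = h"
    and W': "\<And>t. (W has_vector_derivative (1 / h) *\<^sub>R Jmap B \<mu> (W t)) (at t)"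
    and X': "\<And>t. (X has_vector_derivative (1 / h) *\<^sub>R W t) (at t)"
    and U': "\<And>t. (U has_vector_derivative (1 / (2 * h)) *\<^sub>R B (X t) (W t)) (at t)"
  shows "ham_solution B (X 0, U 0) (W 0 - (1/2) *\<^sub>R Jmap B \<mu> (X 0), \<mu>) (phase_curve B \<mu> X U W)"
proof -
  have "(phase_curve B \<mu> X U W has_vector_derivative ham_field B (phase_curve B \<mu> X U W t)) (at t)" for t
  proof -
    have "ham_field B (phase_curve B \<mu> X U W t) =
        (((1 / h) *\<^sub>R W t, (1 / (2 * h)) *\<^sub>R B (X t) (W t)), ((1 / (2 * h)) *\<^sub>R Jmap B \<mu> (W t), 0))"
      using ham_field_eq[of "phase_curve B \<mu> X U W t"] W_norm[of t] \<open>h > 0\<close>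
      by (auto simp: phase_curve_def hmom_def)
    moreover have "(phase_curve B \<mu> X U W has_vector_derivative
        (((1 / h) *\<^sub>R W t, (1 / (2 * h)) *\<^sub>R B (X t) (W t)),
         ((1 / h) *\<^sub>R Jmap B \<mu> (W t) - (1/2) *\<^sub>R Jmap B \<mu> ((1 / h) *\<^sub>R W t), 0))) (at t)"
      unfolding phase_curve_def[abs_def]
      by (intro has_vector_derivative_Pair has_vector_derivative_diff has_vector_derivative_const X' U' W'
          bounded_linear.has_vector_derivative[OF bounded_linear_const_scaleR[OF J.bounded_linear_right]])
    ultimately show ?thesis
      by (simp add: J.scaleR_right scaleR_scaleR flip: scaleR_diff_left)
  qed
  then show ?thesis
    by (simp add: ham_solution_def phase_curve_def)
qed

lemma ham_solution_unique:
  assumes "ham_solution B y \<xi> \<gamma>" and "ham_solution B y \<xi> \<delta>" and "hmom B (y, \<xi>) \<noteq> 0"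
  shows "\<gamma> = \<delta>"
proof
  fix t
  note \<gamma> = ham_solutionD[OF assms(1,3)] and \<delta> = ham_solutionD[OF assms(2,3)]
  have \<gamma>0: "\<gamma> 0 = (y, \<xi>)" "\<delta> 0 = (y, \<xi>)"
    using assms(1,2) by (auto simp: ham_solution_def)
  have hmom_eq: "hmom B (\<gamma> s) = hmom B (\<delta> s)" for s
  proof -
    have "norm (hmom B (\<gamma> s) - hmom B (\<delta> s)) = norm (hmom B (\<gamma> 0) - hmom B (\<delta> 0))"
      using has_vector_derivative_diff[OF \<gamma>(3) \<delta>(3)]
      by (rule norm_constant_if_derivative_orthogonal)
        (simp flip: J.diff_right scaleR_diff_right)
    with \<gamma>0 show ?thesis by simp
  qed
  have x_eq: "fst (fst (\<gamma> s)) = fst (fst (\<delta> s))" for s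
    by (rule eq_if_same_vector_derivative[OF \<gamma>(4) \<delta>(4)[folded hmom_eq]]) (simp add: \<gamma>0)
  have u_eq: "snd (fst (\<gamma> s)) = snd (fst (\<delta> s))" for s
    by (rule eq_if_same_vector_derivative[OF \<gamma>(5) \<delta>(5)[folded hmom_eq x_eq]]) (simp add: \<gamma>0)
  show "\<gamma> t = \<delta> t"
    using \<gamma>(2,6)[of t] \<delta>(2,6)[of t] x_eq[of t] u_eq[of t] hmom_eq[of t] by (simp add: prod_eq_iff)
qed

lemma ham_flow_eqI:
  assumes "ham_solution B y \<xi> \<gamma>" and "hmom B (y, \<xi>) \<noteq> 0"
  shows "ham_flow (HamG B) y \<xi> = \<gamma>"
  unfolding ham_flow_eq_The using assms by (blast intro: the_equality ham_solution_unique)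


lemma ham_solution_exists:
  assumes "hmom B (y, \<xi>) \<noteq> 0"
  obtains \<gamma> where "ham_solution B y \<xi> \<gamma>"
proof -
  define h where "h = norm (hmom B (y, \<xi>))"
  define \<mu> where "\<mu> = snd \<xi>"
  have "h > 0"
    using assms by (simp add: h_def)
  have "bounded_linear (\<lambda>w. (1 / h) *\<^sub>R Jmap B \<mu> w)"
    by (intro bounded_linear_const_scaleR J.bounded_linear_right)
  then obtain W where W0: "W 0 = hmom B (y, \<xi>)"
    and W': "\<And>t. (W has_vector_derivative (1 / h) *\<^sub>R Jmap B \<mu> (W t)) (at t)"
    using linear_ode_solution_exists[where v = "hmom B (y, \<xi>)"] by blast
  have W_norm: "norm (W t) = h" for t
    using norm_constant_if_derivative_orthogonal[OF W'] W0 by (simp add: h_def)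
  have W_cont: "continuous_on UNIV W"
    using W' by (intro continuous_at_imp_continuous_on ballI has_vector_derivative_continuous)
  then have "continuous_on UNIV (\<lambda>t. (1 / h) *\<^sub>R W t)"
    by (intro continuous_intros)
  then obtain X where X0: "X 0 = fst y" and X': "\<And>t. (X has_vector_derivative (1 / h) *\<^sub>R W t) (at t)"
    using primitive_exists[where c = "fst y"] by blast
  have "continuous_on UNIV X"
    using X' by (intro continuous_at_imp_continuous_on ballI has_vector_derivative_continuous)
  then have "continuous_on UNIV (\<lambda>t. (1 / (2 * h)) *\<^sub>R B (X t) (W t))"
    using W_cont by (intro continuous_intros bracket.continuous_on)
  then obtain U where U0: "U 0 = snd y"
    and U': "\<And>t. (U has_vector_derivative (1 / (2 * h)) *\<^sub>R B (X t) (W t)) (at t)"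
    using primitive_exists[where c = "snd y"] by blast
  have "ham_solution B (X 0, U 0) (W 0 - (1/2) *\<^sub>R Jmap B \<mu> (X 0), \<mu>) (phase_curve B \<mu> X U W)"
    by (rule phase_curve_ham_solution[OF \<open>h > 0\<close> W_norm W' X' U'])
  moreover have "(X 0, U 0) = y" and "(W 0 - (1/2) *\<^sub>R Jmap B \<mu> (X 0), \<mu>) = \<xi>"
    by (simp_all add: X0 U0 W0 hmom_def \<mu>_def)
  ultimately show ?thesis
    using that by simp
qed

section \<open>Left translations\<close>

lemma gmult_zero_right [simp]: "gmult B y 0 = y"
  by (simp add: gmult_def bracket.zero_right)

lemma hmom_translate: "hmom B (gmult B y x, barl B y \<eta>) = hmom B (x, \<eta>)"
  by (simp add: hmom_def gmult_def barl_def J.add_right algebra_simps)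

lemma ham_solution_translate:
  assumes "ham_solution B 0 \<xi> \<gamma>" and "hmom B (0, \<xi>) \<noteq> 0"
  shows "ham_solution B y (barl B y \<xi>) (\<lambda>t. (gmult B y (fst (\<gamma> t)), barl B y (snd (\<gamma> t))))"
proof -
  note \<gamma> = ham_solutionD[OF assms]
  define h where "h = norm (hmom B (0, \<xi>))"
  define X where "X s = fst y + fst (fst (\<gamma> s))" for s
  define U where "U s = snd y + snd (fst (\<gamma> s)) + (1/2) *\<^sub>R B (fst y) (fst (fst (\<gamma> s)))" for s
  define W where "W s = hmom B (\<gamma> s)" for s
  have "h > 0"
    using assms(2) by (simp add: h_def)
  have X': "(X has_vector_derivative (1 / h) *\<^sub>R W t) (at t)" for t
    unfolding X_def[abs_def] W_def h_def
    by (intro has_vector_derivative_add[OF has_vector_derivative_const, simplified] \<gamma>(4))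
  have U': "(U has_vector_derivative (1 / (2 * h)) *\<^sub>R B (X t) (W t)) (at t)" for t
    unfolding U_def[abs_def]
    by (rule has_vector_derivative_add[OF has_vector_derivative_add[OF has_vector_derivative_const \<gamma>(5)]
          bounded_linear.has_vector_derivative[OF bounded_linear_const_scaleR[OF bracket.bounded_linear_right] \<gamma>(4)],
          THEN has_vector_derivative_eq_rhs])
      (simp add: X_def W_def h_def bracket.add_left bracket.scaleR_right scaleR_scaleR flip: scaleR_add_right)
  have "ham_solution B (X 0, U 0) (W 0 - (1/2) *\<^sub>R Jmap B (snd \<xi>) (X 0), snd \<xi>) (phase_curve B (snd \<xi>) X U W)"
    by (rule phase_curve_ham_solution[OF \<open>h > 0\<close> _ _ X' U']) (use \<gamma>(1,3) in \<open>simp_all add: W_def h_def\<close>)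
  moreover have "(X 0, U 0) = y" and "(W 0 - (1/2) *\<^sub>R Jmap B (snd \<xi>) (X 0), snd \<xi>) = barl B y \<xi>"
    using assms(1) by (simp_all add: ham_solution_def X_def U_def W_def hmom_def barl_def J.zero_right bracket.zero_right)
  moreover have "phase_curve B (snd \<xi>) X U W = (\<lambda>t. (gmult B y (fst (\<gamma> t)), barl B y (snd (\<gamma> t))))"
    using \<gamma>(2,6) by (simp add: fun_eq_iff phase_curve_def gmult_def barl_def X_def U_def W_def J.add_right algebra_simps)
  ultimately show ?thesis
    by simp
qed

lemma inv_lmap: "inv (lmap B y) = lmap B (- y)"
  by (rule inv_equality)
    (simp_all add: lmap_def gmult_def bracket.add_right bracket.diff_right bracket.minus_left algebra_simps)

lemma inv_barl: "inv (barl B y) = barl B (- y)"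
  by (rule inv_equality) (simp_all add: barl_def J.minus_right)

lemma inner_translate: "(x - gmult B y p) \<bullet> barl B y q = (lmap B (- y) x - p) \<bullet> q"
proof -
  obtain x1 x2 y1 y2 p1 p2 q1 \<mu> where
    "x = (x1, x2)" "y = (y1, y2)" "p = (p1, p2)" "q = (q1, \<mu>)"
    by (metis prod.collapse)
  moreover have "(x1 - (y1 + p1)) \<bullet> Jmap B \<mu> y1 = B y1 x1 \<bullet> \<mu> - B y1 p1 \<bullet> \<mu>"
    by (simp add: inner_commute[of _ "Jmap B \<mu> y1"] Jmap_inner bracket.diff_right bracket.add_right
        inner_diff_right inner_add_right inner_commute[of \<mu>])
  ultimately show ?thesis
    by (simp add: lmap_def gmult_def barl_def inner_diff_left inner_diff_right inner_add_left
        bracket.minus_left) (simp add: field_simps)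
qed

end

theorem proposition9p5:
  fixes B :: "real^'n \<Rightarrow> real^'n \<Rightarrow> real^'m"
    and t :: real and x y \<xi> :: "(real^'n) \<times> (real^'m)"
  assumes "bilinear B"
    and "\<forall>a b. B a b = - B b a"
    and "span (range (\<lambda>(a, b). B a b)) = UNIV"
    and "(y, \<xi>) \<in> Xi B"
  shows "phistar B t x y \<xi> = phi B t (inv (lmap B y) x) (inv (barl B y) \<xi>)"
proof -
  interpret skew_bracket B
    using assms(1,2) by unfold_locales blast+
  obtain \<xi>' where \<xi>: "\<xi> = barl B y \<xi>'" and "fst \<xi>' \<noteq> 0"
    using assms(4) by (force simp: Xi_def)
  then have nz: "hmom B (0, \<xi>') \<noteq> 0"
    by (simp add: hmom_def J.zero_right)
  obtain \<gamma> where \<gamma>: "ham_solution B 0 \<xi>' \<gamma>"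
    using ham_solution_exists[OF nz] .
  have flow0: "ham_flow (HamG B) 0 \<xi>' = \<gamma>"
    by (rule ham_flow_eqI[OF \<gamma> nz])
  have flow: "ham_flow (HamG B) y \<xi> = (\<lambda>t. (gmult B y (fst (\<gamma> t)), barl B y (snd (\<gamma> t))))"
    unfolding \<xi> using ham_flow_eqI[OF ham_solution_translate[OF \<gamma> nz]] hmom_translate[of y 0] nz
    by simp
  have "inv (barl B y) \<xi> = \<xi>'"
    by (simp add: \<xi> inv_barl barl_def J.minus_right)
  moreover have "snd \<xi> = snd \<xi>'"
    by (simp add: \<xi> barl_def)
  ultimately show ?thesis
    by (simp add: phistar_def phi_def xstar_def xistar_def flow flow0 inv_lmap inner_translate)
      (simp add: lmap_def gmult_def diff_diff_eq)
qed

end
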